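(* There exist an integer $n\ge 2$ and a digit set $\mathcal D\subset\{0,1,\ldots,n-1\}^3$ with $2\le\#\mathcal D<n^3$ such that, for the fractal cube $F\subset\mathbb R^3$ determined by $n$ and $\mathcal D$, the set $H^c=\mathbb R^3\setminus H$, where $H=F+\mathbb Z^3$, is connected, and $H$ is the union of uncountably many connected components, each of which is unbounded and invariant under all translations by vectors of $\mathbb Z^3$.
   Context: Given $n\ge 2$ and a digit set $\mathcal D\subset\{0,1,\ldots,n-1\}^k$ with $2\le\#\mathcal D<n^k$, the fractal $k$-cube determined by $(n,\mathcal D)$ is the unique non-empty compact set $F\subset\mathbb R^k$ with $F=\frac{F+\mathcal D}{n}=\bigcup_{d\in\mathcal D}\frac{F+d}{n}$. Here $H=F+\mathbb Z^3=\{x+v: x\in F, v\in\mathbb Z^3\}$ and $H^c=\mathbb R^3\setminus H$. *)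

theory Defs
  imports "HOL-Analysis.Analysis"
begin

definition int_lattice :: "(real^3) set" where
  "int_lattice = {v. \<forall>i. v $ i \<in> \<int>}"

definition digit_cube :: "nat \<Rightarrow> (real^3) set" where
  "digit_cube n = {d. \<forall>i. \<exists>k::nat. k < n \<and> d $ i = real k}"

(* F is the fractal 3-cube determined by (n, D): the (unique) nonempty compact
   set with F = \<Union>d\<in>D. (F + d)/n *)
definition is_fractal_cube :: "nat \<Rightarrow> (real^3) set \<Rightarrow> (real^3) set \<Rightarrow> bool" where
  "is_fractal_cube n D F \<longleftrightarrow> compact F \<and> F \<noteq> {} \<and>
     F = (\<Union>d\<in>D. (\<lambda>x. (1 / real n) *\<^sub>R (x + d)) ` F)"

definition periodic_ext :: "(real^3) set \<Rightarrow> (real^3) set" where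
  "periodic_ext F = {x + v | x v. x \<in> F \<and> v \<in> int_lattice}"

end

theory Submission
  imports Defs
begin

text \<open>Take \<open>n = 5\<close> and let the digits be those \<open>d \<in> {0,\<dots>,4}\<^sup>3\<close> having two coordinates equal
  to the same \<open>a \<in> {1, 3}\<close>. Then \<open>H = F + \<int>\<^sup>3\<close> is the set of \<open>x\<close> such that for every \<open>k\<close> two
  coordinates of \<open>5\<^sup>k x\<close> lie, modulo \<open>1\<close>, in the same band \<open>[a/5, (a+1)/5]\<close>.

  Any two pairs of coordinates of a point of \<open>\<real>\<^sup>3\<close> share a coordinate, and no band contains
  an integer, so the points with two coordinates in \<open>5\<^sup>-\<^sup>k \<int>\<close> lie outside \<open>H\<close>. Their union
  over \<open>k\<close> is connected and dense, and \<open>H\<^sup>c\<close> lies between it and its closure, so \<open>H\<^sup>c\<close> is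
  connected.

  For \<open>u\<close> in the Cantor set of reals with base-5 digits in \<open>{1, 3}\<close>, all lines parallel to the
  axes through \<open>(u, u, u) + \<int>\<^sup>3\<close> lie in \<open>H\<close>, and they form a connected, unbounded,
  \<open>\<int>\<^sup>3\<close>-invariant set. Following the address of a point \<open>x \<in> F\<close> yields such a \<open>u\<close> and points of
  the component of \<open>(u, u, u)\<close> converging to \<open>x\<close>; so every component of \<open>H\<close> contains one of
  these grids. Finally the median of \<open>sin (2\<pi> 5\<^sup>k x\<^sub>i)\<close>, \<open>i = 1, 2, 3\<close>, does not vanish on \<open>H\<close>,
  and at \<open>(u, u, u)\<close> its sign records the \<open>k\<close>-th digit of \<open>u\<close>; hence different \<open>u\<close> lie in
  different components.\<close>

lemma connected_component_segment:
  fixes a b :: "'a::real_normed_vector"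
  shows "closed_segment a b \<subseteq> S \<Longrightarrow> connected_component S a b"
  unfolding connected_component_def by (intro exI[of _ "closed_segment a b"]) simp

lemma connected_component_continuous_image:
  assumes "connected_component S a b" "continuous_on S g" "g ` S \<subseteq> T"
  shows "connected_component T (g a) (g b)"
proof -
  obtain K where K: "connected K" "K \<subseteq> S" "a \<in> K" "b \<in> K"
    using assms(1) unfolding connected_component_def by blast
  then have "connected (g ` K)" using assms(2) by (meson connected_continuous_image continuous_on_subset)
  then show ?thesis
    unfolding connected_component_def using K assms(3) by blast
qed

lemma connected_component_pos_preserved:
  fixes f :: "'a::topological_space \<Rightarrow> real"
  assumes "connected_component S y z" "continuous_on S f" "\<And>x. x \<in> S \<Longrightarrow> f x \<noteq> 0" "0 < f y"
  shows "0 < f z"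
proof (rule ccontr)
  assume z: "\<not> 0 < f z"
  obtain K where K: "connected K" "K \<subseteq> S" "y \<in> K" "z \<in> K"
    using assms(1) unfolding connected_component_def by blast
  have "f z \<noteq> 0" using K(2,4) by (intro assms(3)) (rule subsetD)
  then have "f z < 0" using z by linarith
  moreover have "connected (f ` K)"
    by (rule connected_continuous_image[OF continuous_on_subset[OF assms(2) K(2)] K(1)])
  then have "{f z..f y} \<subseteq> f ` K"
    using K(3,4) by (intro connected_contains_Icc) auto
  ultimately have "0 \<in> f ` K" using assms(4) by auto
  then obtain w where "w \<in> K" "0 = f w" by (rule imageE)
  moreover have "f w \<noteq> 0" using \<open>w \<in> K\<close> K(2) by (intro assms(3)) (rule subsetD)
  ultimately show False by simp
qed

lemma connected_component_limit:
  assumes "closed S" "\<And>m. connected_component S c (p m)" "p \<longlonglongrightarrow> x"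
  shows "connected_component S c x"
proof -
  have "x \<in> connected_component_set S c"
    using assms(2) by (intro closed_sequentially[OF closed_connected_component[OF assms(1)] _ assms(3)]) simp
  then show ?thesis by simp
qed

lemma LIMSEQ_geometric_dist_bound:
  fixes p :: "nat \<Rightarrow> 'a::metric_space"
  assumes "0 \<le> r" "r < 1" "\<And>m. dist (p m) x \<le> r ^ m * C"
  shows "p \<longlonglongrightarrow> x"
proof -
  have "(\<lambda>m. r ^ m * C) \<longlonglongrightarrow> 0"
    by (rule tendsto_mult_left_zero[OF LIMSEQ_power_zero]) (use assms(1,2) in simp)
  then have "(\<lambda>m. dist (p m) x) \<longlonglongrightarrow> 0"
    by (rule Lim_null_comparison[OF always_eventually, rotated]) (use assms(3) in simp)
  then show ?thesis by (rule tendsto_dist_iff[THEN iffD2])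
qed

primrec comp_prefix :: "(nat \<Rightarrow> 'a \<Rightarrow> 'a) \<Rightarrow> nat \<Rightarrow> 'a \<Rightarrow> 'a" where
  "comp_prefix f 0 = id"
| "comp_prefix f (Suc m) = comp_prefix f m \<circ> f m"

lemma comp_prefix_address:
  assumes "\<And>k. xs k = f k (xs (Suc k))"
  shows "comp_prefix f m (xs m) = xs 0"
  by (induction m) (simp_all flip: assms)

lemma comp_prefix_image_subset:
  assumes "\<And>k. f k ` S \<subseteq> S"
  shows "comp_prefix f m ` S \<subseteq> S"
proof (induction m)
  case (Suc m)
  then show ?case using assms[of m] by (fastforce simp: image_comp[symmetric])
qed simp

lemma continuous_on_comp_prefix:
  assumes "\<And>k. continuous_on S (f k)" "\<And>k. f k ` S \<subseteq> S"
  shows "continuous_on S (comp_prefix f m)"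
proof (induction m)
  case (Suc m)
  then show ?case
    using assms continuous_on_compose continuous_on_subset by (metis comp_prefix.simps(2))
qed simp

lemma dist_comp_prefix_le:
  fixes f :: "nat \<Rightarrow> 'a::metric_space \<Rightarrow> 'a"
  assumes "0 \<le> c" "\<And>k x y. dist (f k x) (f k y) \<le> c * dist x y"
  shows "dist (comp_prefix f m x) (comp_prefix f m y) \<le> c ^ m * dist x y"
proof (induction m arbitrary: x y)
  case (Suc m)
  have "dist (comp_prefix f (Suc m) x) (comp_prefix f (Suc m) y) \<le> c ^ m * dist (f m x) (f m y)"
    using Suc by simp
  also have "\<dots> \<le> c ^ m * (c * dist x y)"
    using assms by (intro mult_left_mono) simp_all
  finally show ?case by (simp add: algebra_simps)
qed simp

lemma address_sequence:
  assumes "S \<subseteq> (\<Union>d\<in>D. f d ` S)" "x \<in> S"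
  obtains ds xs where "xs 0 = x" "\<And>k. ds k \<in> D" "\<And>k. xs k \<in> S"
    "\<And>k. xs k = f (ds k) (xs (Suc k))"
proof -
  have "\<forall>y\<in>S. \<exists>p. fst p \<in> D \<and> snd p \<in> S \<and> y = f (fst p) (snd p)"
    using assms(1) by fastforce
  then obtain ch where ch: "\<And>y. y \<in> S \<Longrightarrow> fst (ch y) \<in> D \<and> snd (ch y) \<in> S \<and> y = f (fst (ch y)) (snd (ch y))"
    by metis
  define xs where "xs k = ((snd \<circ> ch) ^^ k) x" for k
  have xs: "xs k \<in> S" for k
    by (induction k) (simp_all add: xs_def assms(2) ch)
  have "xs 0 = x" "xs (Suc k) = snd (ch (xs k))" for k
    by (simp_all add: xs_def)
  then show ?thesis
    by (intro that[of xs "\<lambda>k. fst (ch (xs k))"]) (use ch[OF xs] xs in simp_all)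
qed

section \<open>Bands modulo 1 and pairs of coordinates\<close>

definition band :: "nat \<Rightarrow> real set" where
  "band a = (\<Union>m\<in>\<int>. \<Union>t\<in>{real a/5..(real a+1)/5}. {m + t})"

lemma mem_band: "s \<in> band a \<longleftrightarrow> (\<exists>m::int. real a/5 \<le> s - m \<and> s - m \<le> (real a+1)/5)"
proof
  assume "s \<in> band a"
  then obtain k :: int and t :: real where "s = k + t" "real a/5 \<le> t" "t \<le> (real a+1)/5"
    unfolding band_def by (auto elim!: Ints_cases)
  then show "\<exists>m::int. real a/5 \<le> s - m \<and> s - m \<le> (real a+1)/5" by (intro exI[of _ k]) simp
next
  assume "\<exists>m::int. real a/5 \<le> s - m \<and> s - m \<le> (real a+1)/5"
  then obtain m :: int where "real a/5 \<le> s - m" "s - m \<le> (real a+1)/5" by blast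
  then show "s \<in> band a" unfolding band_def by (intro UN_I[of "of_int m"] UN_I[of "s - m"]) auto
qed

lemma band_intro: "real a/5 \<le> s \<Longrightarrow> s \<le> (real a+1)/5 \<Longrightarrow> s \<in> band a"
  unfolding mem_band by (intro exI[of _ 0]) simp

lemma band_add_Ints: "s \<in> band a \<Longrightarrow> z \<in> \<int> \<Longrightarrow> s + z \<in> band a"
proof -
  assume "s \<in> band a" "z \<in> \<int>"
  then obtain m k :: int where "real a/5 \<le> s - m" "s - m \<le> (real a+1)/5" "z = k"
    unfolding mem_band by (auto elim!: Ints_cases)
  then show ?thesis unfolding mem_band by (intro exI[of _ "m + k"]) auto
qed

lemma band_unit_interval:
  assumes "0 < a" "a < 4" "0 \<le> s" "s \<le> 1" "s \<in> band a"
  shows "real a/5 \<le> s \<and> s \<le> (real a+1)/5"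
proof -
  obtain m :: int where m: "real a/5 \<le> s - m" "s - m \<le> (real a+1)/5"
    using assms(5) unfolding mem_band by blast
  have "0 < real a" "real a + 1 < 5" using assms(1,2) by simp_all
  then have "real_of_int m < 1" "real_of_int m > -1" using m assms(3,4) by (simp_all add: field_simps)
  then have "m = 0" by linarith
  then show ?thesis using m by simp
qed

lemma band_disjoint_Ints:
  assumes "0 < a" "a < 4" "s \<in> band a" shows "s \<notin> \<int>"
proof
  assume "s \<in> \<int>"
  then obtain k :: int where k: "s = k" by (elim Ints_cases)
  obtain m :: int where m: "real a/5 \<le> s - m" "s - m \<le> (real a+1)/5"
    using assms(3) unfolding mem_band by blast
  have "real a + 1 < 5" "0 < real a" using assms(1,2) by simp_all
  then have "real_of_int m < k" "real_of_int k < m + 1" using m k by (simp_all add: field_simps)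
  then have "m < k" "k < m + 1" by linarith+
  then show False by linarith
qed

lemma sin_band:
  assumes "s \<in> band a"
  obtains t where "real a/5 \<le> t" "t \<le> (real a+1)/5" "sin (2 * pi * s) = sin (2 * pi * t)"
proof -
  obtain m :: int where m: "real a/5 \<le> s - m" "s - m \<le> (real a+1)/5"
    using assms unfolding mem_band by blast
  have "sin (2 * pi * s) = sin (2 * pi * (s - m) + 2*pi * of_int m)" by (simp add: algebra_simps)
  also have "\<dots> = sin (2 * pi * (s - m))" by (simp add: sin_add sin_integer_2pi cos_integer_2pi)
  finally show ?thesis using that m by blast
qed

lemma sin_pos_band_1: "s \<in> band 1 \<Longrightarrow> sin (2 * pi * s) > 0"
  by (erule sin_band) (auto intro!: sin_gt_zero)

lemma sin_neg_band_3: "s \<in> band 3 \<Longrightarrow> sin (2 * pi * s) < 0"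
  by (erule sin_band) (auto intro!: sin_lt_zero)

lemma closed_band: "closed (band a)"
  unfolding band_def by (rule closed_compact_sums) (auto simp: Ints_def closed_of_int_image)

definition two_coords :: "(real \<Rightarrow> bool) \<Rightarrow> (real^3) set" where
  "two_coords P = {y. \<exists>i j. i \<noteq> j \<and> P (y$i) \<and> P (y$j)}"

lemma two_coordsI: "i \<noteq> j \<Longrightarrow> P (y$i) \<Longrightarrow> P (y$j) \<Longrightarrow> y \<in> two_coords P"
  unfolding two_coords_def by blast

lemma two_coordsE:
  assumes "y \<in> two_coords P"
  obtains i j where "i \<noteq> j" "P (y$i)" "P (y$j)"
  using assms unfolding two_coords_def by blast

lemma vec_in_two_coords: "P c \<Longrightarrow> vec c \<in> two_coords P"
  by (rule two_coordsI[of "1::3" 2]) simp_all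

text \<open>This is where dimension 3 is used: two pairs of coordinates always share one.\<close>
lemma two_coords_disjoint:
  assumes "\<And>s. P s \<Longrightarrow> \<not> Q s"
  shows "two_coords P \<inter> two_coords Q = {}"
proof -
  have "i' = i \<or> i' = j \<or> j' = i \<or> j' = j" if "(i::3) \<noteq> j" "i' \<noteq> j'" for i j i' j'
    using that exhaust_3[of i] exhaust_3[of j] exhaust_3[of i'] exhaust_3[of j'] by auto
  then show ?thesis using assms unfolding two_coords_def by blast
qed

lemma closed_two_coords:
  assumes "closed {s. P s}"
  shows "closed (two_coords P)"
proof -
  have "two_coords P = (\<Union>i. \<Union>j\<in>-{i}. (\<lambda>y. y$i) -` {s. P s} \<inter> (\<lambda>y. y$j) -` {s. P s})"
    unfolding two_coords_def by auto
  also have "closed \<dots>"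
    by (intro closed_UN closed_Int ballI continuous_closed_vimage[OF assms] continuous_intros) simp_all
  finally show ?thesis .
qed

lemma segment_subset_two_coords:
  assumes "i \<noteq> j" "a$i = b$i" "a$j = b$j" "P (a$i)" "P (a$j)"
  shows "closed_segment a b \<subseteq> two_coords P"
proof
  fix z assume "z \<in> closed_segment a b"
  then obtain t where "z = (1 - t) *\<^sub>R a + t *\<^sub>R b" unfolding in_segment by blast
  then have "z$i = (1 - t) * a$i + t * b$i" "z$j = (1 - t) * a$j + t * b$j" by simp_all
  then have "z$i = a$i" "z$j = a$j" using assms(2,3) by (simp_all add: algebra_simps)
  then show "z \<in> two_coords P" using assms(1,4,5) by (intro two_coordsI[of i j]) simp_all
qed

lemma connected_two_coords:
  assumes "P c"
  shows "connected (two_coords P)"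
proof -
  have to_vec: "connected_component (two_coords P) y (vec c)" if y: "y \<in> two_coords P" for y
  proof -
    obtain i j where ij: "i \<noteq> j" "P (y$i)" "P (y$j)"
      using y by (rule two_coordsE)
    define y0 :: "real^3" where "y0 = (\<chi> m. if P (y$m) then y$m else c)"
    define y1 :: "real^3" where "y1 = (\<chi> m. if m = 1 then c else y0$m)"
    define y2 :: "real^3" where "y2 = (\<chi> m. if m = 3 then y0$m else c)"
    have P0: "\<And>m. P (y0$m)" by (simp add: y0_def assms)
    have "closed_segment y y0 \<subseteq> two_coords P"
      by (rule segment_subset_two_coords[of i j]) (simp_all add: y0_def ij)
    moreover have "closed_segment y0 y1 \<subseteq> two_coords P"
      by (rule segment_subset_two_coords[of 2 3]) (simp_all add: y1_def P0)
    moreover have "closed_segment y1 y2 \<subseteq> two_coords P"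
      by (rule segment_subset_two_coords[of 1 3]) (simp_all add: y1_def y2_def assms P0)
    moreover have "closed_segment y2 (vec c) \<subseteq> two_coords P"
      by (rule segment_subset_two_coords[of 1 2]) (simp_all add: y2_def assms)
    ultimately show ?thesis
      using connected_component_segment connected_component_trans by metis
  qed
  show ?thesis unfolding connected_iff_connected_component
  proof (intro ballI)
    fix x y assume "x \<in> two_coords P" "y \<in> two_coords P"
    then show "connected_component (two_coords P) x y"
      using to_vec connected_component_sym connected_component_trans by metis
  qed
qed

section \<open>Base-5 expansions\<close>

definition tail5 :: "(nat \<Rightarrow> nat) \<Rightarrow> nat \<Rightarrow> real" where
  "tail5 a k = (\<Sum>j. a (k + j) / 5 ^ Suc j)"

lemma sums_4_div_pow5: "(\<lambda>j. 4 / 5 ^ Suc j :: real) sums 1"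
  using sums_mult[OF geometric_sums[of "1/5::real"], of "4/5"] by (simp add: power_divide)

lemma tail5_term_le:
  fixes a :: "nat \<Rightarrow> nat"
  assumes "\<And>j. a j \<le> 4"
  shows "a (k + j) / 5 ^ Suc j \<le> (4 / 5 ^ Suc j :: real)"
  using assms[of "k + j"] by (intro divide_right_mono) simp_all

lemma summable_tail5:
  fixes a :: "nat \<Rightarrow> nat"
  assumes "\<And>j. a j \<le> 4"
  shows "summable (\<lambda>j. a (k + j) / 5 ^ Suc j :: real)"
  by (rule summable_comparison_test[OF _ sums_summable[OF sums_4_div_pow5]])
    (use tail5_term_le[of a, OF assms] in auto)

lemma tail5_nonneg: "(\<And>j. a j \<le> 4) \<Longrightarrow> 0 \<le> tail5 a k"
  unfolding tail5_def by (intro suminf_nonneg summable_tail5) simp_all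

lemma tail5_le_1:
  assumes "\<And>j. a j \<le> 4"
  shows "tail5 a k \<le> 1"
  using suminf_le[OF tail5_term_le[of a, OF assms] summable_tail5[of a, OF assms] sums_summable[OF sums_4_div_pow5]]
  unfolding tail5_def sums_unique[OF sums_4_div_pow5, symmetric] .

lemma tail5_Suc:
  assumes "\<And>j. a j \<le> 4"
  shows "tail5 a k = (a k + tail5 a (Suc k)) / 5"
proof -
  note sm = summable_tail5[of a, OF assms]
  have "(\<Sum>j. a (k + Suc j) / 5 ^ Suc (Suc j)) = tail5 a k - a k / 5"
    unfolding tail5_def using suminf_split_head[OF sm[of k]] by simp
  moreover have "(\<Sum>j. a (k + Suc j) / 5 ^ Suc (Suc j)) = tail5 a (Suc k) / 5"
    unfolding tail5_def using suminf_divide[OF sm[of "Suc k"], of 5] by (simp add: field_simps)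
  ultimately show ?thesis by simp
qed

lemma scaled_tail5_in_band:
  assumes "\<And>j. a j \<le> 4"
  shows "5 ^ m * tail5 a k \<in> band (a (k + m))"
proof -
  have "5 ^ m * tail5 a k - tail5 a (k + m) \<in> \<int>"
  proof (induction m)
    case (Suc m)
    have "5 ^ Suc m * tail5 a k - tail5 a (k + Suc m) =
        5 * (5 ^ m * tail5 a k - tail5 a (k + m)) + a (k + m)"
      using tail5_Suc[of a "k + m", OF assms] by (simp add: algebra_simps)
    moreover have "5 * (5 ^ m * tail5 a k - tail5 a (k + m)) + a (k + m) \<in> \<int>"
      using Suc by (intro Ints_add Ints_mult) simp_all
    ultimately show ?case by metis
  qed simp
  moreover have "tail5 a (k + m) \<in> band (a (k + m))"
    using tail5_Suc[of a "k + m", OF assms] tail5_nonneg[of a "Suc (k + m)", OF assms]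
      tail5_le_1[of a "Suc (k + m)", OF assms]
    by (intro band_intro) simp_all
  ultimately show ?thesis using band_add_Ints by fastforce
qed

definition cantor5 :: "real set" where
  "cantor5 = {u. 0 \<le> u \<and> u \<le> 1 \<and> (\<forall>k::nat. 5 ^ k * u \<in> band 1 \<union> band 3)}"

lemma tail5_in_cantor5:
  assumes "\<And>j. a j \<in> {1, 3}"
  shows "tail5 a k \<in> cantor5"
proof -
  have a4: "a j \<le> 4" for j using assms[of j] by auto
  have "5 ^ m * tail5 a k \<in> band 1 \<union> band 3" for m
    using scaled_tail5_in_band[of a m k, OF a4] assms[of "k + m"] by auto
  then show ?thesis
    unfolding cantor5_def using tail5_nonneg[of a, OF a4] tail5_le_1[of a, OF a4] by blast
qed

section \<open>The fractal cube\<close>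

definition band_pairs :: "(real^3) set" where
  "band_pairs = two_coords (\<lambda>s. s \<in> band 1) \<union> two_coords (\<lambda>s. s \<in> band 3)"

definition H5 :: "(real^3) set" where
  "H5 = {x. \<forall>k::nat. (5 ^ k) *\<^sub>R x \<in> band_pairs}"

definition F5 :: "(real^3) set" where
  "F5 = cbox 0 1 \<inter> H5"

definition D5 :: "(real^3) set" where
  "D5 = digit_cube 5 \<inter> (\<Union>a\<in>{1, 3}. two_coords (\<lambda>s. s = real a))"

lemma band_pairsE:
  assumes "y \<in> band_pairs"
  obtains a i j where "a \<in> {1, 3}" "i \<noteq> j" "y$i \<in> band a" "y$j \<in> band a"
  using assms unfolding band_pairs_def
proof (elim UnE two_coordsE)
  fix i j assume "i \<noteq> j" "y$i \<in> band 1" "y$j \<in> band 1"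
  then show thesis using that[of 1 i j] by simp
next
  fix i j assume "i \<noteq> j" "y$i \<in> band 3" "y$j \<in> band 3"
  then show thesis using that[of 3 i j] by simp
qed

lemma band_pairsI:
  "a \<in> {1, 3} \<Longrightarrow> i \<noteq> j \<Longrightarrow> y$i \<in> band a \<Longrightarrow> y$j \<in> band a \<Longrightarrow> y \<in> band_pairs"
  unfolding band_pairs_def using two_coordsI[of i j "\<lambda>s. s \<in> band a" y] by auto

lemma mem_F5: "x \<in> F5 \<longleftrightarrow> (\<forall>i. 0 \<le> x$i \<and> x$i \<le> 1) \<and> x \<in> H5"
  by (simp add: F5_def mem_box_cart)

lemma closed_H5: "closed H5"
proof -
  have "closed band_pairs"
    unfolding band_pairs_def by (intro closed_Un closed_two_coords) (simp_all add: closed_band)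
  then have "closed (\<Inter>k. (\<lambda>x. (5 ^ k) *\<^sub>R x) -` band_pairs)"
    by (intro closed_INT ballI continuous_closed_vimage continuous_intros)
  moreover have "H5 = (\<Inter>k. (\<lambda>x. (5 ^ k) *\<^sub>R x) -` band_pairs)"
    unfolding H5_def by auto
  ultimately show ?thesis by simp
qed

lemma band_pairs_add_Ints:
  assumes "y \<in> band_pairs" "\<And>i. w$i \<in> \<int>"
  shows "y + w \<in> band_pairs"
proof -
  obtain a i j where "a \<in> {1, 3}" "i \<noteq> j" "y$i \<in> band a" "y$j \<in> band a"
    using assms(1) by (rule band_pairsE)
  then show ?thesis by (intro band_pairsI[of a i j]) (simp_all add: band_add_Ints assms(2))
qed

lemma int_lattice_uminus: "v \<in> int_lattice \<Longrightarrow> - v \<in> int_lattice"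
  unfolding int_lattice_def by simp

lemma H5_add_lattice: "x \<in> H5 \<Longrightarrow> v \<in> int_lattice \<Longrightarrow> x + v \<in> H5"
  unfolding H5_def int_lattice_def using band_pairs_add_Ints by (simp add: scaleR_add_right)

lemma scaleR_pow5_Suc: "(5 ^ Suc k) *\<^sub>R x = (5 ^ k) *\<^sub>R (5 *\<^sub>R x :: 'a::real_vector)"
  by (simp add: mult.commute)

lemma H5_iff: "x \<in> H5 \<longleftrightarrow> x \<in> band_pairs \<and> 5 *\<^sub>R x \<in> H5"
proof
  assume x: "x \<in> H5"
  have "(5 ^ 0) *\<^sub>R x \<in> band_pairs" "(5 ^ Suc k) *\<^sub>R x \<in> band_pairs" for k
    using x unfolding H5_def by blast+
  then show "x \<in> band_pairs \<and> 5 *\<^sub>R x \<in> H5"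
    unfolding H5_def scaleR_pow5_Suc by simp
next
  assume x: "x \<in> band_pairs \<and> 5 *\<^sub>R x \<in> H5"
  show "x \<in> H5" unfolding H5_def
  proof (intro CollectI allI)
    fix k show "(5 ^ k) *\<^sub>R x \<in> band_pairs"
    proof (cases k)
      case (Suc m)
      have "(5 ^ m) *\<^sub>R (5 *\<^sub>R x) \<in> band_pairs" using x unfolding H5_def by blast
      then show ?thesis unfolding Suc scaleR_pow5_Suc .
    qed (use x in simp)
  qed
qed

lemma periodic_ext_F5: "periodic_ext F5 = H5"
proof
  show "periodic_ext F5 \<subseteq> H5"
    unfolding periodic_ext_def F5_def using H5_add_lattice by auto
  show "H5 \<subseteq> periodic_ext F5"
  proof
    fix z assume z: "z \<in> H5"
    define v :: "real^3" where "v = (\<chi> i. of_int \<lfloor>z$i\<rfloor>)"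
    have v: "v \<in> int_lattice" unfolding v_def int_lattice_def by simp
    have "z$i - of_int \<lfloor>z$i\<rfloor> < 1" for i using frac_lt_1[of "z$i"] by (simp add: frac_def)
    then have "z - v \<in> cbox 0 1"
      unfolding mem_box_cart v_def by (simp add: less_imp_le)
    moreover have "z - v \<in> H5" using H5_add_lattice[OF z int_lattice_uminus[OF v]] by simp
    ultimately show "z \<in> periodic_ext F5"
      unfolding periodic_ext_def F5_def using v by (intro CollectI exI[of _ "z - v"] exI[of _ v]) auto
  qed
qed

lemma compact_F5: "compact F5"
  unfolding F5_def by (intro compact_Int_closed compact_cbox closed_H5)

lemma grid_subset_H5:
  assumes u: "u \<in> cantor5"
  shows "two_coords (\<lambda>s. s - u \<in> \<int>) \<subseteq> H5"
proof
  fix y assume "y \<in> two_coords (\<lambda>s. s - u \<in> \<int>)"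
  then obtain i j where ij: "i \<noteq> j" "y$i - u \<in> \<int>" "y$j - u \<in> \<int>" by (rule two_coordsE)
  have "(5 ^ k) *\<^sub>R y \<in> band_pairs" for k :: nat
  proof -
    obtain a where a: "a \<in> {1, 3}" "5 ^ k * u \<in> band a"
      using u unfolding cantor5_def by blast
    have "5 ^ k * u + 5 ^ k * (y$m - u) \<in> band a" if "y$m - u \<in> \<int>" for m
      using that by (intro band_add_Ints[OF a(2)] Ints_mult) simp_all
    then have "((5 ^ k) *\<^sub>R y)$i \<in> band a" "((5 ^ k) *\<^sub>R y)$j \<in> band a"
      using ij by (simp_all add: algebra_simps)
    then show ?thesis by (rule band_pairsI[OF a(1) ij(1)])
  qed
  then show "y \<in> H5" unfolding H5_def by blast
qed

lemma vec_in_F5: "u \<in> cantor5 \<Longrightarrow> vec u \<in> F5"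
  unfolding mem_F5 using grid_subset_H5 vec_in_two_coords[of "\<lambda>s. s - u \<in> \<int>" u]
  by (auto simp: cantor5_def)

lemma F5_nonempty: "F5 \<noteq> {}"
  using vec_in_F5[OF tail5_in_cantor5[of "\<lambda>_. 1" 0]] by auto

lemma digit_cube_subset_int_lattice: "digit_cube n \<subseteq> int_lattice"
proof
  fix d assume d: "d \<in> digit_cube n"
  have "d$i \<in> \<int>" for i
  proof -
    obtain k where "d$i = real k" using d unfolding digit_cube_def by blast
    then show ?thesis by simp
  qed
  then show "d \<in> int_lattice" unfolding int_lattice_def by blast
qed

lemma digit_cube_bounds:
  assumes "d \<in> digit_cube n"
  shows "0 \<le> d$i" "d$i \<le> real n - 1"
proof -
  obtain k where "k < n" "d$i = real k" using assms unfolding digit_cube_def by blast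
  then show "0 \<le> d$i" "d$i \<le> real n - 1" by simp_all
qed

lemma finite_digit_cube: "finite (digit_cube n)" and card_digit_cube_le: "card (digit_cube n) \<le> n ^ 3"
proof -
  define emb :: "(3 \<Rightarrow> nat) \<Rightarrow> real^3" where "emb f = (\<chi> i. real (f i))" for f
  have sub: "digit_cube n \<subseteq> emb ` (\<Pi>\<^sub>E i\<in>UNIV. {..<n})"
  proof
    fix d assume "d \<in> digit_cube n"
    then have "\<forall>i. \<exists>k. k < n \<and> d$i = real k" unfolding digit_cube_def by blast
    then have "\<exists>f. \<forall>i. f i < n \<and> d$i = real (f i)" by (rule choice)
    then obtain f where "\<forall>i. f i < n \<and> d$i = real (f i)" by blast
    then show "d \<in> emb ` (\<Pi>\<^sub>E i\<in>UNIV. {..<n})"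
      by (intro image_eqI[of _ _ f]) (auto simp: emb_def vec_eq_iff)
  qed
  then show "finite (digit_cube n)" by (rule finite_subset) (simp add: finite_PiE)
  have "card (digit_cube n) \<le> card (emb ` (\<Pi>\<^sub>E i\<in>UNIV. {..<n}))"
    by (rule card_mono[OF _ sub]) (simp add: finite_PiE)
  also have "\<dots> \<le> card (\<Pi>\<^sub>E i\<in>(UNIV::3 set). {..<n})"
    by (rule card_image_le) (simp add: finite_PiE)
  also have "\<dots> = n ^ 3" by (simp add: card_PiE)
  finally show "card (digit_cube n) \<le> n ^ 3" .
qed

lemma card_D5: "2 \<le> card D5" "card D5 < 5 ^ 3"
proof -
  have fin: "finite D5" unfolding D5_def using finite_digit_cube by blast
  have "vec 1 \<in> two_coords (\<lambda>s. s = real 1)" "vec 3 \<in> two_coords (\<lambda>s. s = real 3)"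
    by (simp_all only: vec_in_two_coords of_nat_1 of_nat_numeral)
  moreover have "vec 1 \<in> digit_cube 5" "vec 3 \<in> digit_cube 5"
    unfolding digit_cube_def by (auto intro: exI[of _ "1::nat"] exI[of _ "3::nat"])
  ultimately have "{vec 1, vec 3} \<subseteq> D5" unfolding D5_def by blast
  moreover have "card {vec 1, vec 3 :: real^3} = 2" by (simp add: vec_eq_iff)
  ultimately show "2 \<le> card D5" using card_mono[OF fin] by metis
  have "0 \<notin> two_coords (\<lambda>s. s = real a)" if "a \<in> {1, 3}" for a
    using that unfolding two_coords_def by auto
  then have "D5 \<subseteq> digit_cube 5 - {0}" unfolding D5_def by blast
  then have "card D5 \<le> card (digit_cube 5 - {0})"
    by (rule card_mono[rotated]) (simp add: finite_digit_cube)
  also have "\<dots> < card (digit_cube 5)"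
    by (rule card_Diff1_less[OF finite_digit_cube]) (auto simp: digit_cube_def)
  also have "\<dots> \<le> 5 ^ 3" by (rule card_digit_cube_le)
  finally show "card D5 < 5 ^ 3" .
qed

lemma exists_base5_digit:
  assumes "0 \<le> s" "s \<le> 1"
  obtains k :: nat where "k \<le> 4" "real k \<le> 5 * s" "5 * s \<le> real k + 1"
proof (cases "\<lfloor>5 * s\<rfloor> \<le> 4")
  case True
  have "real (nat \<lfloor>5 * s\<rfloor>) = of_int \<lfloor>5 * s\<rfloor>" using assms by simp
  then show ?thesis
    using that[of "nat \<lfloor>5 * s\<rfloor>"] True floor_correct[of "5 * s"] by linarith
next
  case False
  then have "s = 1" using assms by linarith
  then show ?thesis using that[of 4] by simp
qed

lemma exists_D5_digit:
  assumes x: "x \<in> cbox 0 1" and a: "a \<in> {1, 3}" "i \<noteq> j" "x$i \<in> band a" "x$j \<in> band a"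
  obtains d where "d \<in> D5" "5 *\<^sub>R x - d \<in> cbox 0 1"
proof -
  have cube: "0 \<le> x$m" "x$m \<le> 1" for m using x unfolding mem_box_cart by simp_all
  have a4: "0 < a" "a < 4" using a(1) by auto
  have "\<exists>k::nat. k \<le> 4 \<and> real k \<le> 5 * x$m \<and> 5 * x$m \<le> real k + 1 \<and> (m \<in> {i, j} \<longrightarrow> k = a)"
    for m
  proof (cases "m \<in> {i, j}")
    case True
    then have "real a / 5 \<le> x$m \<and> x$m \<le> (real a + 1) / 5"
      using band_unit_interval[OF a4 cube] a(3,4) by blast
    then show ?thesis using a4 by (intro exI[of _ a]) auto
  next
    case False
    obtain k :: nat where "k \<le> 4" "real k \<le> 5 * x$m" "5 * x$m \<le> real k + 1"
      using cube by (rule exists_base5_digit)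
    then show ?thesis using False by blast
  qed
  then have "\<exists>k. \<forall>m. k m \<le> 4 \<and> real (k m) \<le> 5 * x$m \<and> 5 * x$m \<le> real (k m) + 1 \<and>
      (m \<in> {i, j} \<longrightarrow> k m = a)"
    by (rule choice[OF allI])
  then obtain k where k: "\<forall>m. k m \<le> 4 \<and> real (k m) \<le> 5 * x$m \<and> 5 * x$m \<le> real (k m) + 1 \<and>
      (m \<in> {i, j} \<longrightarrow> k m = a)"
    by blast
  define d :: "real^3" where "d = (\<chi> m. real (k m))"
  have "k m < 5" for m using k[rule_format, of m] by linarith
  then have "d \<in> digit_cube 5" unfolding digit_cube_def d_def by auto
  moreover have "d \<in> two_coords (\<lambda>s. s = real a)"
    using a(2) k by (intro two_coordsI[of i j]) (simp_all add: d_def)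
  ultimately have "d \<in> D5" unfolding D5_def using a(1) by blast
  moreover have "0 \<le> 5 * x$m - k m \<and> 5 * x$m - k m \<le> 1" for m using k[rule_format, of m] by linarith
  then have "5 *\<^sub>R x - d \<in> cbox 0 1" unfolding mem_box_cart d_def by simp
  ultimately show ?thesis by (rule that)
qed

lemma F5_subset_pieces: "F5 \<subseteq> (\<Union>d\<in>D5. (\<lambda>y. (1/5) *\<^sub>R (y + d)) ` F5)"
proof
  fix x assume "x \<in> F5"
  then have x: "x \<in> cbox 0 1" "x \<in> band_pairs" "5 *\<^sub>R x \<in> H5"
    unfolding F5_def using H5_iff[of x] by auto
  from x(2) obtain a i j where "a \<in> {1, 3}" "i \<noteq> j" "x$i \<in> band a" "x$j \<in> band a"
    by (rule band_pairsE)
  then obtain d where d: "d \<in> D5" "5 *\<^sub>R x - d \<in> cbox 0 1"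
    using x(1) exists_D5_digit by metis
  have "5 *\<^sub>R x + - d \<in> H5"
    using d(1) digit_cube_subset_int_lattice unfolding D5_def
    by (intro H5_add_lattice[OF x(3) int_lattice_uminus]) blast
  then have "5 *\<^sub>R x - d \<in> F5" using d(2) unfolding F5_def by simp
  moreover have "x = (1/5) *\<^sub>R ((5 *\<^sub>R x - d) + d)" by simp
  ultimately show "x \<in> (\<Union>d\<in>D5. (\<lambda>y. (1/5) *\<^sub>R (y + d)) ` F5)" using d(1) by blast
qed

lemma pieces_subset_F5:
  assumes d: "d \<in> D5" and y: "y \<in> F5"
  shows "(1/5) *\<^sub>R (y + d) \<in> F5"
proof -
  obtain a where a: "a \<in> {1, 3}" "d \<in> two_coords (\<lambda>s. s = real a)" and dc: "d \<in> digit_cube 5"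
    using d unfolding D5_def by blast
  obtain i j where ij: "i \<noteq> j" "d$i = a" "d$j = a" using a(2) by (rule two_coordsE)
  have ycube: "\<And>m. 0 \<le> y$m \<and> y$m \<le> 1" and yH: "y \<in> H5"
    using y unfolding mem_F5 by auto
  have "0 \<le> y$m + d$m \<and> y$m + d$m \<le> 5" for m
    using ycube[of m] digit_cube_bounds[OF dc, of m] by simp
  then have "(1/5) *\<^sub>R (y + d) \<in> cbox 0 1" unfolding mem_box_cart by simp
  moreover have "(1/5) *\<^sub>R (y + d) \<in> band_pairs"
    using a(1) ij ycube by (intro band_pairsI[of a i j] band_intro) simp_all
  moreover have "5 *\<^sub>R ((1/5) *\<^sub>R (y + d)) \<in> H5"
    using H5_add_lattice[OF yH] digit_cube_subset_int_lattice dc by auto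
  ultimately show ?thesis unfolding F5_def using H5_iff by blast
qed

lemma F5_self_similar: "F5 = (\<Union>d\<in>D5. (\<lambda>y. (1/5) *\<^sub>R (y + d)) ` F5)"
  using F5_subset_pieces pieces_subset_F5 by blast

section \<open>Connectedness of the complement\<close>

lemma fine_grid_disjoint_H5: "two_coords (\<lambda>s. 5 ^ k * s \<in> \<int>) \<inter> H5 = {}"
proof -
  have "(5 ^ k) *\<^sub>R y \<in> two_coords (\<lambda>s. s \<in> \<int>)" if y: "y \<in> two_coords (\<lambda>s. 5 ^ k * s \<in> \<int>)" for y
  proof -
    obtain i j where "i \<noteq> j" "5 ^ k * y$i \<in> \<int>" "5 ^ k * y$j \<in> \<int>" using y by (rule two_coordsE)
    then show ?thesis by (intro two_coordsI[of i j]) simp_all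
  qed
  moreover have "two_coords (\<lambda>s. s \<in> \<int>) \<inter> two_coords (\<lambda>s. s \<in> band a) = {}" if "a \<in> {1, 3}" for a
  proof (rule two_coords_disjoint)
    show "s \<notin> band a" if "s \<in> \<int>" for s
      using band_disjoint_Ints[of a s] \<open>a \<in> {1, 3}\<close> that by auto
  qed
  ultimately show ?thesis unfolding H5_def band_pairs_def by blast
qed

lemma closure_fine_grids: "closure (\<Union>k. two_coords (\<lambda>s. 5 ^ k * s \<in> \<int>)) = UNIV"
proof -
  have "y \<in> closure (\<Union>k. two_coords (\<lambda>s. 5 ^ k * s \<in> \<int>))" for y :: "real^3"
    unfolding closure_approachable
  proof (intro allI impI)
    fix e :: real assume "e > 0"
    then obtain k :: nat where k: "(1/5) ^ k < e / 3" using real_arch_pow_inv[of "e/3" "1/5"] by auto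
    define q :: "real^3" where "q = (\<chi> m. of_int \<lfloor>5 ^ k * y$m\<rfloor> / 5 ^ k)"
    have "q \<in> two_coords (\<lambda>s. 5 ^ k * s \<in> \<int>)" by (intro two_coordsI[of 1 2]) (simp_all add: q_def)
    moreover have "\<bar>(q - y)$m\<bar> \<le> (1/5) ^ k" for m
    proof -
      have "(q - y)$m = - (5 ^ k * y$m - of_int \<lfloor>5 ^ k * y$m\<rfloor>) / 5 ^ k"
        by (simp add: q_def field_simps)
      moreover have "0 \<le> 5 ^ k * y$m - of_int \<lfloor>5 ^ k * y$m\<rfloor>" "5 ^ k * y$m - of_int \<lfloor>5 ^ k * y$m\<rfloor> \<le> 1"
        using floor_correct[of "5 ^ k * y$m"] by linarith+
      ultimately show ?thesis by (simp add: power_divide divide_right_mono)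
    qed
    then have "dist q y \<le> 3 * (1/5) ^ k"
      using norm_le_l1_cart[of "q - y"] sum_mono[of UNIV "\<lambda>m. \<bar>(q - y)$m\<bar>" "\<lambda>_. (1/5) ^ k"]
      by (simp add: dist_norm)
    ultimately show "\<exists>q\<in>\<Union>k. two_coords (\<lambda>s. 5 ^ k * s \<in> \<int>). dist q y < e" using k by force
  qed
  then show ?thesis by blast
qed

lemma connected_Compl_H5: "connected (- H5)"
proof (rule connected_intermediate_closure)
  have "0 \<in> two_coords (\<lambda>s. 5 ^ k * s \<in> \<int>)" for k :: nat
    using vec_in_two_coords[of "\<lambda>s. 5 ^ k * s \<in> \<int>" 0] by simp
  then show "connected (\<Union>k. two_coords (\<lambda>s. 5 ^ k * s \<in> \<int>))"
    by (intro connected_Union) (auto intro: connected_two_coords[of _ 0])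
  show "(\<Union>k. two_coords (\<lambda>s. 5 ^ k * s \<in> \<int>)) \<subseteq> - H5" using fine_grid_disjoint_H5 by blast
  show "- H5 \<subseteq> closure (\<Union>k. two_coords (\<lambda>s. 5 ^ k * s \<in> \<int>))" by (simp add: closure_fine_grids)
qed

section \<open>Components\<close>

lemma connected_component_F5_two_coords:
  assumes "u \<in> cantor5" "p \<in> cbox 0 1" "q \<in> cbox 0 1" "i \<noteq> j"
    "p$i = u" "p$j = u" "q$i = u" "q$j = u"
  shows "connected_component F5 p q"
proof (rule connected_component_segment)
  have "closed_segment p q \<subseteq> cbox 0 1"
    using assms(2,3) by (simp add: closed_segment_subset convex_box)
  moreover have "closed_segment p q \<subseteq> two_coords (\<lambda>s. s - u \<in> \<int>)"
    using assms(4-8) by (intro segment_subset_two_coords[of i j]) simp_all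
  ultimately show "closed_segment p q \<subseteq> F5"
    using grid_subset_H5[OF assms(1)] unfolding F5_def by blast
qed

lemma connected_component_F5_piece:
  assumes d: "d \<in> D5" "d \<in> two_coords (\<lambda>s. s = real a)"
    and t: "t \<in> cantor5" "(a + t) / 5 \<in> cantor5"
  shows "connected_component F5 ((1/5) *\<^sub>R (vec t + d)) (vec ((a + t) / 5))"
proof -
  obtain i j where ij: "i \<noteq> j" "d$i = a" "d$j = a" using d(2) by (rule two_coordsE)
  have "(1/5) *\<^sub>R (vec t + d) \<in> F5" by (rule pieces_subset_F5[OF d(1) vec_in_F5[OF t(1)]])
  moreover have "vec ((a + t) / 5) \<in> F5" by (rule vec_in_F5[OF t(2)])
  ultimately show ?thesis
    using ij by (intro connected_component_F5_two_coords[OF t(2) _ _ ij(1)]) (auto simp: F5_def add.commute)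
qed

lemma F5_address:
  assumes "x \<in> F5"
  obtains xs ds and as :: "nat \<Rightarrow> nat" where "xs 0 = x" "\<And>k. xs k \<in> F5" "\<And>k. xs k = (1/5) *\<^sub>R (xs (Suc k) + ds k)"
    "\<And>k. ds k \<in> D5" "\<And>k. as k \<in> {1, 3}" "\<And>k. ds k \<in> two_coords (\<lambda>s. s = real (as k))"
proof -
  obtain ds xs where xs: "xs 0 = x" "\<And>k. xs k \<in> F5" "\<And>k. xs k = (1/5) *\<^sub>R (xs (Suc k) + ds k)"
    and ds: "\<And>k. ds k \<in> D5"
    using address_sequence[OF F5_subset_pieces assms] by blast
  have "\<forall>k. \<exists>a. a \<in> {1, 3} \<and> ds k \<in> two_coords (\<lambda>s. s = real a)"
    using ds unfolding D5_def by blast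
  then obtain as where as: "\<And>k. as k \<in> {1, 3}" "\<And>k. ds k \<in> two_coords (\<lambda>s. s = real (as k))"
    by (auto dest!: choice)
  show ?thesis by (rule that[OF xs ds as])
qed

lemma F5_diagonal_chain:
  assumes ds: "\<And>k. ds k \<in> D5" "\<And>k. ds k \<in> two_coords (\<lambda>s. s = real (as k))"
    and as: "\<And>k. as k \<in> {1, 3}"
  shows "connected_component F5 (vec (tail5 as 0))
    (comp_prefix (\<lambda>k y. (1/5) *\<^sub>R (y + ds k)) m (vec (tail5 as m)))"
proof (induction m)
  case 0
  show ?case using vec_in_F5[OF tail5_in_cantor5[OF as]] by simp
next
  case (Suc m)
  let ?g = "\<lambda>k y. (1/5) *\<^sub>R (y + ds k)"
  have t: "tail5 as k \<in> cantor5" for k by (rule tail5_in_cantor5[OF as])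
  have "as k \<le> 4" for k using as[of k] by auto
  then have t_Suc: "tail5 as m = (as m + tail5 as (Suc m)) / 5" by (rule tail5_Suc)
  have g_F5: "?g k ` F5 \<subseteq> F5" for k using pieces_subset_F5[OF ds(1)] by blast
  have g_cont: "continuous_on F5 (?g k)" for k by (intro continuous_intros)
  have "connected_component F5 (?g m (vec (tail5 as (Suc m)))) (vec ((as m + tail5 as (Suc m)) / 5))"
    using t[of m] unfolding t_Suc by (rule connected_component_F5_piece[OF ds t])
  then have "connected_component F5 (?g m (vec (tail5 as (Suc m)))) (vec (tail5 as m))"
    by (simp only: t_Suc[symmetric])
  then have "connected_component F5 (comp_prefix ?g (Suc m) (vec (tail5 as (Suc m))))
      (comp_prefix ?g m (vec (tail5 as m)))"
    unfolding comp_prefix.simps o_apply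
    by (rule connected_component_continuous_image[OF _ continuous_on_comp_prefix[OF g_cont g_F5]
          comp_prefix_image_subset[OF g_F5]])
  then show ?case by (rule connected_component_trans[OF Suc connected_component_sym])
qed

lemma F5_component_meets_diagonal:
  assumes "x \<in> F5"
  obtains u where "u \<in> cantor5" "connected_component F5 x (vec u)"
proof -
  obtain xs ds and as :: "nat \<Rightarrow> nat" where xs: "xs 0 = x" "\<And>k. xs k \<in> F5" "\<And>k. xs k = (1/5) *\<^sub>R (xs (Suc k) + ds k)"
    and ds: "\<And>k. ds k \<in> D5" and as: "\<And>k. as k \<in> {1, 3}"
    and ds_as: "\<And>k. ds k \<in> two_coords (\<lambda>s. s = real (as k))"
    using F5_address[OF assms] by blast
  let ?g = "\<lambda>k y. (1/5) *\<^sub>R (y + ds k)"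
  let ?p = "\<lambda>m. comp_prefix ?g m (vec (tail5 as m))"
  have g_dist: "dist (?g k y) (?g k z) \<le> 1/5 * dist y z" for k y z
  proof -
    have "?g k y - ?g k z = (1/5) *\<^sub>R (y - z)" by (simp add: algebra_simps)
    then show ?thesis by (simp add: dist_norm)
  qed
  have "dist (?p m) x \<le> (1/5) ^ m * diameter F5" for m
  proof -
    have "x = comp_prefix ?g m (xs m)"
      unfolding comp_prefix_address[of xs ?g, OF xs(3)] xs(1) ..
    then have "dist (?p m) x \<le> (1/5) ^ m * dist (vec (tail5 as m)) (xs m)"
      by (simp only: dist_comp_prefix_le[OF _ g_dist] zero_le_divide_1_iff zero_le_numeral)
    also have "\<dots> \<le> (1/5) ^ m * diameter F5"
      using compact_imp_bounded[OF compact_F5] vec_in_F5[OF tail5_in_cantor5[OF as]] xs(2)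
      by (intro mult_left_mono diameter_bounded_bound) simp_all
    finally show ?thesis .
  qed
  then have "?p \<longlonglongrightarrow> x" by (rule LIMSEQ_geometric_dist_bound[rotated 2]) simp_all
  then have "connected_component F5 (vec (tail5 as 0)) x"
    by (rule connected_component_limit[OF compact_imp_closed[OF compact_F5] F5_diagonal_chain[OF ds ds_as as]])
  then show ?thesis by (rule that[OF tail5_in_cantor5[OF as] connected_component_sym])
qed

lemma homeomorphism_H5_translation:
  assumes "v \<in> int_lattice"
  shows "homeomorphism H5 H5 (\<lambda>y. y + v) (\<lambda>y. y - v)"
proof (rule homeomorphismI)
  show "(\<lambda>y. y + v) ` H5 \<subseteq> H5" using H5_add_lattice[OF _ assms] by blast
  show "(\<lambda>y. y - v) ` H5 \<subseteq> H5" using H5_add_lattice[OF _ int_lattice_uminus[OF assms]] by auto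
  show "continuous_on H5 (\<lambda>y. y + v)" "continuous_on H5 (\<lambda>y. y - v)"
    by (intro continuous_intros)+
qed simp_all

lemma vec_add_lattice_in_grid: "v \<in> int_lattice \<Longrightarrow> vec u + v \<in> two_coords (\<lambda>s. s - u \<in> \<int>)"
  unfolding int_lattice_def by (intro two_coordsI[of 1 2]) simp_all

lemma grid_subset_component:
  assumes "u \<in> cantor5"
  shows "two_coords (\<lambda>s. s - u \<in> \<int>) \<subseteq> connected_component_set H5 (vec u)"
  by (rule connected_component_maximal[OF _ connected_two_coords[of _ u] grid_subset_H5[OF assms]])
    (simp_all add: vec_in_two_coords)

lemma H5_component_eq_diagonal:
  assumes x: "x \<in> H5"
  obtains u where "u \<in> cantor5" "connected_component_set H5 x = connected_component_set H5 (vec u)"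
proof -
  obtain f v where f: "f \<in> F5" and v: "v \<in> int_lattice" and xfv: "x = f + v"
    using x unfolding periodic_ext_F5[symmetric] periodic_ext_def by blast
  obtain u where u: "u \<in> cantor5" "connected_component F5 f (vec u)"
    using F5_component_meets_diagonal[OF f] by blast
  have "connected_component H5 f (vec u)"
    using connected_component_of_subset[OF u(2)] unfolding F5_def by blast
  then have "connected_component H5 (f + v) (vec u + v)"
    using connected_component_homeomorphismI[OF homeomorphism_H5_translation[OF v]] by blast
  moreover have "connected_component H5 (vec u + v) (vec u)"
    using grid_subset_component[OF u(1)] vec_add_lattice_in_grid[OF v]
    by (auto intro: connected_component_sym)
  ultimately have "connected_component H5 x (vec u)"
    unfolding xfv by (rule connected_component_trans)
  then show ?thesis using that u(1) connected_component_eq by blast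
qed

lemma not_bounded_H5_component_diagonal:
  assumes "u \<in> cantor5"
  shows "\<not> bounded (connected_component_set H5 (vec u))"
proof
  assume bdd: "bounded (connected_component_set H5 (vec u))"
  have "(\<chi> i. if i = 1 then t else u) \<in> two_coords (\<lambda>s. s - u \<in> \<int>)" for t
    by (intro two_coordsI[of 2 3]) simp_all
  then have "UNIV \<subseteq> (\<lambda>y. y$1) ` connected_component_set H5 (vec u)"
    using grid_subset_component[OF assms] by (auto intro!: image_eqI)
  moreover have "bounded ((\<lambda>y. y$1) ` connected_component_set H5 (vec u))"
    by (rule bounded_linear_image[OF bdd bounded_linear_vec_nth])
  ultimately show False using bounded_subset not_bounded_UNIV by blast
qed

lemma translate_H5_component_diagonal:
  assumes "u \<in> cantor5" "v \<in> int_lattice"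
  shows "(\<lambda>y. y + v) ` connected_component_set H5 (vec u) = connected_component_set H5 (vec u)"
proof -
  have "vec u \<in> H5" using vec_in_F5[OF assms(1)] unfolding F5_def by blast
  then have "(\<lambda>y. y + v) ` connected_component_set H5 (vec u) = connected_component_set H5 (vec u + v)"
    using connected_component_set_homeomorphism[OF homeomorphism_H5_translation[OF assms(2)]] by blast
  also have "\<dots> = connected_component_set H5 (vec u)"
    using grid_subset_component[OF assms(1)] vec_add_lattice_in_grid[OF assms(2)]
    by (intro connected_component_eq) blast
  finally show ?thesis .
qed

lemma not_bounded_H5_component:
  assumes "x \<in> H5"
  shows "\<not> bounded (connected_component_set H5 x)"
proof -
  obtain u where "u \<in> cantor5" "connected_component_set H5 x = connected_component_set H5 (vec u)"
    using assms by (rule H5_component_eq_diagonal)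
  then show ?thesis using not_bounded_H5_component_diagonal by simp
qed

lemma translate_H5_component:
  assumes "x \<in> H5" "v \<in> int_lattice"
  shows "(\<lambda>y. y + v) ` connected_component_set H5 x = connected_component_set H5 x"
proof -
  obtain u where "u \<in> cantor5" "connected_component_set H5 x = connected_component_set H5 (vec u)"
    using assms(1) by (rule H5_component_eq_diagonal)
  then show ?thesis using translate_H5_component_diagonal assms(2) by simp
qed

section \<open>Uncountably many components\<close>

definition median3 :: "real \<Rightarrow> real \<Rightarrow> real \<Rightarrow> real" where
  "median3 p q r = max (min p q) (min (max p q) r)"

lemma median3_pos: "(i::3) \<noteq> j \<Longrightarrow> 0 < f i \<Longrightarrow> 0 < f j \<Longrightarrow> 0 < median3 (f 1) (f 2) (f 3)"
  using exhaust_3[of i] exhaust_3[of j] by (auto simp: median3_def)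

lemma median3_neg: "(i::3) \<noteq> j \<Longrightarrow> f i < 0 \<Longrightarrow> f j < 0 \<Longrightarrow> median3 (f 1) (f 2) (f 3) < 0"
  using exhaust_3[of i] exhaust_3[of j] by (auto simp: median3_def)

definition sine_median :: "nat \<Rightarrow> real^3 \<Rightarrow> real" where
  "sine_median k y = median3 (sin (2 * pi * (5 ^ k * y$1))) (sin (2 * pi * (5 ^ k * y$2)))
     (sin (2 * pi * (5 ^ k * y$3)))"

lemma continuous_on_sine_median: "continuous_on S (sine_median k)"
  unfolding sine_median_def[abs_def] median3_def by (intro continuous_intros)

lemma sine_median_vec: "sine_median k (vec u) = sin (2 * pi * (5 ^ k * u))"
  by (simp add: sine_median_def median3_def)

lemma sine_median_nonzero:
  assumes "y \<in> H5"
  shows "sine_median k y \<noteq> 0"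
proof -
  have "(5 ^ k) *\<^sub>R y \<in> band_pairs" using assms unfolding H5_def by blast
  then obtain a i j where a: "a \<in> {1, 3}" "i \<noteq> j"
    "((5 ^ k) *\<^sub>R y)$i \<in> band a" "((5 ^ k) *\<^sub>R y)$j \<in> band a"
    by (rule band_pairsE)
  define f where "f m = sin (2 * pi * (5 ^ k * y$m))" for m
  have "sine_median k y = median3 (f 1) (f 2) (f 3)" by (simp add: sine_median_def f_def)
  moreover have "0 < f i \<and> 0 < f j \<or> f i < 0 \<and> f j < 0"
    using a sin_pos_band_1 sin_neg_band_3 unfolding f_def by auto
  ultimately show ?thesis using median3_pos[OF a(2)] median3_neg[OF a(2)] by force
qed

definition cantor_point :: "nat set \<Rightarrow> real" where
  "cantor_point B = tail5 (\<lambda>j. if j \<in> B then 3 else 1) 0"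

lemma cantor_point_in_cantor5: "cantor_point B \<in> cantor5"
  unfolding cantor_point_def by (rule tail5_in_cantor5) simp

lemma sine_median_cantor_point: "0 < sine_median k (vec (cantor_point B)) \<longleftrightarrow> k \<notin> B"
proof -
  have band: "5 ^ k * cantor_point B \<in> band (if k \<in> B then 3 else 1)"
    unfolding cantor_point_def using scaled_tail5_in_band[of "\<lambda>j. if j \<in> B then 3 else 1" k 0]
    by simp
  show ?thesis
  proof (cases "k \<in> B")
    case True
    then show ?thesis using sin_neg_band_3 band unfolding sine_median_vec if_P[OF True] by fastforce
  next
    case False
    then show ?thesis using sin_pos_band_1 band unfolding sine_median_vec if_not_P[OF False] by blast
  qed
qed

lemma inj_H5_component_cantor_point: "inj (\<lambda>B. connected_component_set H5 (vec (cantor_point B)))"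
proof (rule injI)
  fix B B'
  assume eq: "connected_component_set H5 (vec (cantor_point B)) =
    connected_component_set H5 (vec (cantor_point B'))"
  have "vec (cantor_point B') \<in> H5"
    using vec_in_F5[OF cantor_point_in_cantor5] unfolding F5_def by blast
  then have "connected_component H5 (vec (cantor_point B)) (vec (cantor_point B'))"
    using eq by (metis connected_component_refl mem_Collect_eq)
  then have "k \<notin> B \<longleftrightarrow> k \<notin> B'" for k
    using connected_component_pos_preserved[OF _ continuous_on_sine_median sine_median_nonzero]
      connected_component_sym sine_median_cantor_point by metis
  then show "B = B'" by blast
qed

lemma uncountable_components_H5: "uncountable {connected_component_set H5 x | x. x \<in> H5}"
proof
  assume "countable {connected_component_set H5 x | x. x \<in> H5}"
  moreover have "range (\<lambda>B. connected_component_set H5 (vec (cantor_point B))) \<subseteq>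
      {connected_component_set H5 x | x. x \<in> H5}"
    using vec_in_F5[OF cantor_point_in_cantor5] unfolding F5_def by blast
  ultimately have "countable (UNIV :: nat set set)"
    using countable_image_inj_on[OF _ inj_H5_component_cantor_point] countable_subset by blast
  moreover have "uncountable (UNIV :: nat set set)"
    unfolding uncountable_def using Cantors_theorem[of "UNIV :: nat set"] by simp
  ultimately show False by blast
qed

theorem theorem2:
  shows "\<exists>(n::nat) D F. n \<ge> 2 \<and> D \<subseteq> digit_cube n \<and> 2 \<le> card D \<and> card D < n ^ 3 \<and>
    is_fractal_cube n D F \<and>
    connected (- periodic_ext F) \<and>
    uncountable {connected_component_set (periodic_ext F) x | x. x \<in> periodic_ext F} \<and>
    (\<forall>C \<in> {connected_component_set (periodic_ext F) x | x. x \<in> periodic_ext F}.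
       \<not> bounded C \<and> (\<forall>v \<in> int_lattice. (\<lambda>y. y + v) ` C = C))"
proof (rule exI[of _ 5], rule exI[of _ D5], rule exI[of _ F5], intro conjI)
  show "(2::nat) \<le> 5" by simp
  show "D5 \<subseteq> digit_cube 5" unfolding D5_def by blast
  show "2 \<le> card D5" "card D5 < 5 ^ 3" by (fact card_D5)+
  show "is_fractal_cube 5 D5 F5"
    unfolding is_fractal_cube_def of_nat_numeral by (intro conjI compact_F5 F5_nonempty F5_self_similar)
  show "connected (- periodic_ext F5)"
    unfolding periodic_ext_F5 by (fact connected_Compl_H5)
  show "uncountable {connected_component_set (periodic_ext F5) x | x. x \<in> periodic_ext F5}"
    unfolding periodic_ext_F5 by (fact uncountable_components_H5)
  show "\<forall>C \<in> {connected_component_set (periodic_ext F5) x | x. x \<in> periodic_ext F5}.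
      \<not> bounded C \<and> (\<forall>v \<in> int_lattice. (\<lambda>y. y + v) ` C = C)"
    unfolding periodic_ext_F5 using not_bounded_H5_component translate_H5_component by blast
qed

end
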